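(* Assume that $K\subset\mathbb{R}^d$ is a convex parameter space with finite diameter, and that $V\subset K$ is a measurable set satisfying $\lim_{\epsilon\to0}\mathrm{vol}(V_\epsilon)<\mathrm{vol}(K)$. Then for any bounded function $f:K\to\mathbb{R}$, the restricted Cheeger constant $\mathcal{C}_f(V)$ is strictly positive.
   Context: $\mathrm{vol}$ is Lebesgue (Borel) measure; $V_\epsilon=\{x\in K:\inf_{y\in V}\|x-y\|_2\le\epsilon\}$. $\mu_f$ is the probability measure on $K$ with density $e^{-f(x)}/\int_Ke^{-f(y)}dy$; for $V\subset K$, $\mathcal{C}_f(V):=\liminf_{\epsilon\searrow0}\inf_{A\subset V}\frac{\mu_f(A_\epsilon)-\mu_f(A)}{\epsilon\,\mu_f(A)}$, where $A_\epsilon=\{x\in K:\inf_{y\in A}\|x-y\|_2\le\epsilon\}$. *)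

theory Defs
  imports "HOL-Analysis.Analysis"
begin

text \<open>The closed epsilon-neighbourhood of A inside K:
  A_eps = {x in K. inf_{y in A} |x - y| <= eps}; for A empty the infimum is +infinity,
  so the neighbourhood is empty.\<close>
definition eps_nbhd :: "'a::euclidean_space set \<Rightarrow> 'a set \<Rightarrow> real \<Rightarrow> 'a set" where
  "eps_nbhd K A e = {x \<in> K. A \<noteq> {} \<and> infdist x A \<le> e}"

definition mu_f :: "'a::euclidean_space set \<Rightarrow> ('a \<Rightarrow> real) \<Rightarrow> 'a set \<Rightarrow> real" where
  "mu_f K f A =
     set_lebesgue_integral lebesgue (A \<inter> K) (\<lambda>x. exp (- f x))
     / set_lebesgue_integral lebesgue K (\<lambda>x. exp (- f x))"

text \<open>Restricted Cheeger constant C_f(V), valued in the extended reals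
  (an infimum over an empty family is +infinity).\<close>
definition cheeger :: "'a::euclidean_space set \<Rightarrow> ('a \<Rightarrow> real) \<Rightarrow> 'a set \<Rightarrow> ereal" where
  "cheeger K f V =
     Liminf (at_right 0) (\<lambda>e.
       INF A \<in> {A. A \<subseteq> V \<and> A \<in> sets lebesgue \<and> mu_f K f A > 0}.
         ereal ((mu_f K f (eps_nbhd K A e) - mu_f K f A) / (e * mu_f K f A)))"

end

theory Submission
  imports Defs
begin

text \<open>Since |f| \<le> M on K, the Gibbs density lies between exp (-M)/Z and exp M/Z, so the
  Cheeger quotient of A is at least exp (-2M) vol(A_e - A) / (e vol A). The
  core is an isoperimetric inequality for a convex body K of diameter at most D,
  e vol(A) vol(K - A_e) \<le> D 2^d vol(K) vol(A_e - A), obtained by averaging over the segments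
  joining A to K - A_e. For small e the hypothesis on V gives
  vol(K - A_e) \<ge> vol K - vol V_e \<ge> (vol K - L)/2 uniformly in A \<subseteq> V, hence a positive
  lower bound for the whole liminf.\<close>

lemma borel_measurable_infdist [measurable]: "(\<lambda>z. infdist z P) \<in> borel_measurable borel"
  by (intro borel_measurable_continuous_onI continuous_intros)

lemma emeasure_lborel_eq_affine_nn_integral:
  fixes S :: "'a::euclidean_space set"
  assumes "c \<noteq> 0" and "S \<in> sets borel"
  shows "emeasure lborel S = ennreal (\<bar>c\<bar> ^ DIM('a)) * (\<integral>\<^sup>+y. indicator S (u + c *\<^sub>R y) \<partial>lborel)"
proof -
  have "emeasure lborel S = (\<integral>\<^sup>+y. indicator S y \<partial>lborel)"
    using assms(2) by simp
  also have "\<dots> = (\<integral>\<^sup>+y. indicator S y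
      \<partial>density (distr lborel borel (\<lambda>x. u + c *\<^sub>R x)) (\<lambda>_. \<bar>c\<bar> ^ DIM('a)))"
    using lborel_affine[OF assms(1), of u] by simp
  also have "\<dots> = ennreal (\<bar>c\<bar> ^ DIM('a)) * (\<integral>\<^sup>+y. indicator S (u + c *\<^sub>R y) \<partial>lborel)"
    using assms(2) by (simp add: nn_integral_density nn_integral_distr nn_integral_cmult
        del: nn_integral_indicator)
  finally show ?thesis .
qed

lemma nn_integral_indicator_affine_le:
  fixes S :: "'a::euclidean_space set"
  assumes "S \<in> sets borel" and "0 < a" and "a \<le> c"
  shows "(\<integral>\<^sup>+y. indicator S (u + c *\<^sub>R y) \<partial>lborel) \<le> ennreal (inverse a ^ DIM('a)) * emeasure lborel S"
proof -
  let ?I = "\<integral>\<^sup>+y. indicator S (u + c *\<^sub>R y) \<partial>lborel"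
  have "?I = ennreal 1 * ?I" by simp
  also have "\<dots> \<le> ennreal ((inverse a * c) ^ DIM('a)) * ?I"
    using assms(2,3) by (intro mult_right_mono ennreal_leI one_le_power) (auto simp: field_simps)
  also have "\<dots> = ennreal (inverse a ^ DIM('a)) * (ennreal (\<bar>c\<bar> ^ DIM('a)) * ?I)"
    using assms(2,3) by (simp add: power_mult_distrib ennreal_mult' mult.assoc)
  also have "\<dots> = ennreal (inverse a ^ DIM('a)) * emeasure lborel S"
    using emeasure_lborel_eq_affine_nn_integral[of c S u] assms by simp
  finally show ?thesis .
qed

text \<open>Along a segment from a point of P to a point at distance more than e from P, the
  distance to P is D-Lipschitz in the parameter, so after its last zero it needs time at
  least e/D to climb from 0 to e.\<close>

lemma segment_dwells_in_shell:
  fixes x y :: "'a::euclidean_space"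
  assumes "x \<in> P" and "e < infdist y P" and "0 < e" and "0 < D" and "dist x y \<le> D"
  shows "\<exists>t0. {t0<..t0 + e/D} \<subseteq>
    {t \<in> {0..1}. 0 < infdist (x + t *\<^sub>R (y - x)) P \<and> infdist (x + t *\<^sub>R (y - x)) P \<le> e}"
proof -
  define g where "g t = infdist (x + t *\<^sub>R (y - x)) P" for t :: real
  have lip: "\<bar>g s - g t\<bar> \<le> \<bar>s - t\<bar> * D" for s t
  proof -
    have "\<bar>g s - g t\<bar> \<le> dist (x + s *\<^sub>R (y - x)) (x + t *\<^sub>R (y - x))"
      unfolding g_def by (rule infdist_triangle_abs)
    also have "\<dots> = \<bar>s - t\<bar> * dist x y"
      by (simp add: dist_norm norm_minus_commute scaleR_diff_left[symmetric])
    also have "\<dots> \<le> \<bar>s - t\<bar> * D"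
      using assms(5) by (intro mult_left_mono) auto
    finally show ?thesis .
  qed
  define Z where "Z = {0..1} \<inter> g -` {0}"
  have "continuous_on UNIV g"
    unfolding g_def by (intro continuous_intros)
  then have "closed Z"
    unfolding Z_def by (intro closed_Int closed_vimage) auto
  moreover have "0 \<in> Z" and bdd: "bdd_above Z"
    using assms(1) by (auto simp: Z_def g_def intro: bdd_aboveI[of _ 1])
  ultimately have "Sup Z \<in> Z"
    using closed_contains_Sup by blast
  then have t0: "0 \<le> Sup Z" "Sup Z \<le> 1" "g (Sup Z) = 0"
    by (auto simp: Z_def)
  have "e < g 1"
    using assms(2) by (simp add: g_def)
  with lip[of 1 "Sup Z"] t0 have "e < (1 - Sup Z) * D"
    by auto
  then have less1: "Sup Z + e / D < 1"
    using assms(4) by (simp add: field_simps)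
  show ?thesis
  proof (intro exI subsetI)
    fix t assume t: "t \<in> {Sup Z<..Sup Z + e/D}"
    then have t01: "t \<in> {0..1}"
      using t0 less1 by auto
    have "t \<notin> Z"
    proof
      assume "t \<in> Z"
      then have "t \<le> Sup Z" using bdd by (rule cSup_upper)
      with t show False by simp
    qed
    then have "0 < g t"
      using t01 infdist_nonneg[of _ P] unfolding Z_def g_def
      by (metis IntI dual_order.order_iff_strict singletonI vimage_eq)
    have "g t \<le> (t - Sup Z) * D"
      using lip[of t "Sup Z"] t t0(3) by auto
    also have "\<dots> \<le> e / D * D"
      using t assms(4) by (intro mult_right_mono) auto
    finally have "t \<in> {t \<in> {0..1}. 0 < g t \<and> g t \<le> e}"
      using t01 \<open>0 < g t\<close> assms(4) by simp
    then show "t \<in> {t \<in> {0..1}. 0 < infdist (x + t *\<^sub>R (y - x)) P \<and> infdist (x + t *\<^sub>R (y - x)) P \<le> e}"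
      by (simp add: g_def)
  qed
qed

lemma shell_time_along_segment_ge:
  fixes C P :: "'a::euclidean_space set"
  assumes "convex C" and "x \<in> C" and "y \<in> C" and "x \<in> P" and "e < infdist y P"
    and "0 < e" and "0 < D" and "dist x y \<le> D"
  shows "ennreal (e/D) \<le> (\<integral>\<^sup>+t. indicator {0..1} t *
    indicator {z\<in>C. 0 < infdist z P \<and> infdist z P \<le> e} (x + t *\<^sub>R (y - x)) \<partial>lborel)"
proof -
  obtain t0 where t0: "{t0<..t0 + e/D} \<subseteq>
      {t \<in> {0..1}. 0 < infdist (x + t *\<^sub>R (y - x)) P \<and> infdist (x + t *\<^sub>R (y - x)) P \<le> e}"
    using segment_dwells_in_shell[OF assms(4,5,6,7,8)] by blast
  have "x + t *\<^sub>R (y - x) \<in> C" if "t \<in> {0..1}" for t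
    using assms(1-3) that convex_alt[of C] by (simp add: algebra_simps)
  then have "indicator {t0<..t0 + e/D} t \<le> indicator {0..1} t *
      (indicator {z\<in>C. 0 < infdist z P \<and> infdist z P \<le> e} (x + t *\<^sub>R (y - x)) :: ennreal)" for t
    using t0 by (auto simp: indicator_def)
  then have "(\<integral>\<^sup>+t. indicator {t0<..t0 + e/D} t \<partial>lborel) \<le> (\<integral>\<^sup>+t. indicator {0..1} t *
      indicator {z\<in>C. 0 < infdist z P \<and> infdist z P \<le> e} (x + t *\<^sub>R (y - x)) \<partial>lborel)"
    by (intro nn_integral_mono)
  then show ?thesis
    using assms(6,7) by simp
qed

lemma nn_integral_indicator_segment_point_le:
  fixes C P B S :: "'a::euclidean_space set"
  assumes [measurable]: "P \<in> sets borel" "B \<in> sets borel" "S \<in> sets borel" "C \<in> sets borel"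
    and "P \<subseteq> C" and "B \<subseteq> C" and "t \<in> {0..1}"
  shows "(\<integral>\<^sup>+x. \<integral>\<^sup>+y. indicator P x * indicator B y * indicator S (x + t *\<^sub>R (y - x)) \<partial>lborel \<partial>lborel)
    \<le> ennreal (2 ^ DIM('a)) * emeasure lborel C * emeasure lborel S"
proof (cases "1/2 \<le> t")
  case True
  have "(\<integral>\<^sup>+x. \<integral>\<^sup>+y. indicator P x * indicator B y * indicator S (x + t *\<^sub>R (y - x)) \<partial>lborel \<partial>lborel)
      \<le> (\<integral>\<^sup>+x. indicator P x * (ennreal (2 ^ DIM('a)) * emeasure lborel S) \<partial>lborel)"
  proof (intro nn_integral_mono)
    fix x :: 'a
    have "(\<integral>\<^sup>+y. indicator P x * indicator B y * indicator S (x + t *\<^sub>R (y - x)) \<partial>lborel)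
        \<le> (\<integral>\<^sup>+y. indicator P x * indicator S ((1 - t) *\<^sub>R x + t *\<^sub>R y) \<partial>lborel)"
      by (intro nn_integral_mono) (simp add: indicator_def algebra_simps)
    also have "\<dots> = indicator P x * (\<integral>\<^sup>+y. indicator S ((1 - t) *\<^sub>R x + t *\<^sub>R y) \<partial>lborel)"
      by (subst nn_integral_cmult) auto
    also have "\<dots> \<le> indicator P x * (ennreal (2 ^ DIM('a)) * emeasure lborel S)"
      using nn_integral_indicator_affine_le[of S "1/2" t] True by (intro mult_left_mono) auto
    finally show "(\<integral>\<^sup>+y. indicator P x * indicator B y * indicator S (x + t *\<^sub>R (y - x)) \<partial>lborel)
        \<le> indicator P x * (ennreal (2 ^ DIM('a)) * emeasure lborel S)" .
  qed
  also have "\<dots> \<le> ennreal (2 ^ DIM('a)) * emeasure lborel C * emeasure lborel S"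
    using emeasure_mono[OF \<open>P \<subseteq> C\<close>, of lborel]
    by (simp add: nn_integral_multc mult_ac mult_right_mono)
  finally show ?thesis .
next
  case False
  have "(\<integral>\<^sup>+x. \<integral>\<^sup>+y. indicator P x * indicator B y * indicator S (x + t *\<^sub>R (y - x)) \<partial>lborel \<partial>lborel)
      = (\<integral>\<^sup>+y. \<integral>\<^sup>+x. indicator P x * indicator B y * indicator S (x + t *\<^sub>R (y - x)) \<partial>lborel \<partial>lborel)"
    by (intro lborel_pair.Fubini'[symmetric]) measurable
  also have "\<dots> \<le> (\<integral>\<^sup>+y. indicator B y * (ennreal (2 ^ DIM('a)) * emeasure lborel S) \<partial>lborel)"
  proof (intro nn_integral_mono)
    fix y :: 'a
    have "(\<integral>\<^sup>+x. indicator P x * indicator B y * indicator S (x + t *\<^sub>R (y - x)) \<partial>lborel)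
        \<le> (\<integral>\<^sup>+x. indicator B y * indicator S (t *\<^sub>R y + (1 - t) *\<^sub>R x) \<partial>lborel)"
      by (intro nn_integral_mono) (simp add: indicator_def algebra_simps)
    also have "\<dots> = indicator B y * (\<integral>\<^sup>+x. indicator S (t *\<^sub>R y + (1 - t) *\<^sub>R x) \<partial>lborel)"
      by (subst nn_integral_cmult) auto
    also have "\<dots> \<le> indicator B y * (ennreal (2 ^ DIM('a)) * emeasure lborel S)"
      using nn_integral_indicator_affine_le[of S "1/2" "1 - t"] False by (intro mult_left_mono) auto
    finally show "(\<integral>\<^sup>+x. indicator P x * indicator B y * indicator S (x + t *\<^sub>R (y - x)) \<partial>lborel)
        \<le> indicator B y * (ennreal (2 ^ DIM('a)) * emeasure lborel S)" .
  qed
  also have "\<dots> \<le> ennreal (2 ^ DIM('a)) * emeasure lborel C * emeasure lborel S"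
    using emeasure_mono[OF \<open>B \<subseteq> C\<close>, of lborel]
    by (simp add: nn_integral_multc mult_ac mult_right_mono)
  finally show ?thesis .
qed

text \<open>Each segment from P to a point of C farther than e from P spends parameter time at least
  e/D in the shell. At a fixed time t the point x + t(y - x) is affine in x with coefficient
  1 - t and in y with coefficient t; integrating out the variable whose coefficient is at least
  1/2 loses at most a factor 2^d.\<close>

lemma shell_isoperimetric_emeasure:
  fixes C P :: "'a::euclidean_space set"
  assumes "convex C" and "P \<subseteq> C" and [measurable]: "P \<in> sets borel" "C \<in> sets borel"
    and "0 < e" and "0 < D" and diam: "\<And>x y. x \<in> C \<Longrightarrow> y \<in> C \<Longrightarrow> dist x y \<le> D"
  shows "ennreal (e/D) * emeasure lborel P * emeasure lborel {y\<in>C. e < infdist y P}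
    \<le> ennreal (2 ^ DIM('a)) * emeasure lborel C * emeasure lborel {z\<in>C. 0 < infdist z P \<and> infdist z P \<le> e}"
proof -
  define S where "S = {z\<in>C. 0 < infdist z P \<and> infdist z P \<le> e}"
  define B where "B = {y\<in>C. e < infdist y P}"
  have [measurable]: "S \<in> sets borel" "B \<in> sets borel"
    unfolding S_def B_def by measurable
  define F where "F x y t = indicator {0..1} t *
      (indicator P x * indicator B y * indicator S (x + t *\<^sub>R (y - x)) :: ennreal)" for x y :: 'a and t :: real
  have "ennreal (e/D) * emeasure lborel P * emeasure lborel B
      = (\<integral>\<^sup>+x. \<integral>\<^sup>+y. indicator P x * indicator B y * ennreal (e/D) \<partial>lborel \<partial>lborel)"
    by (simp add: nn_integral_cmult nn_integral_multc mult_ac)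
  also have "\<dots> \<le> (\<integral>\<^sup>+x. \<integral>\<^sup>+y. indicator P x * indicator B y *
      (\<integral>\<^sup>+t. indicator {0..1} t * indicator S (x + t *\<^sub>R (y - x)) \<partial>lborel) \<partial>lborel \<partial>lborel)"
    using shell_time_along_segment_ge[OF assms(1) _ _ _ _ \<open>0 < e\<close> \<open>0 < D\<close> diam] \<open>P \<subseteq> C\<close>
    by (intro nn_integral_mono) (auto simp: indicator_def S_def B_def)
  also have "\<dots> = (\<integral>\<^sup>+x. \<integral>\<^sup>+y. \<integral>\<^sup>+t. F x y t \<partial>lborel \<partial>lborel \<partial>lborel)"
    unfolding F_def by (intro nn_integral_cong, subst nn_integral_cmult[symmetric], measurable) (simp add: mult_ac)
  also have "\<dots> = (\<integral>\<^sup>+x. \<integral>\<^sup>+t. \<integral>\<^sup>+y. F x y t \<partial>lborel \<partial>lborel \<partial>lborel)"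
    by (intro nn_integral_cong lborel_pair.Fubini'[symmetric]) (unfold F_def, measurable)
  also have "\<dots> = (\<integral>\<^sup>+t. \<integral>\<^sup>+x. \<integral>\<^sup>+y. F x y t \<partial>lborel \<partial>lborel \<partial>lborel)"
    by (intro lborel_pair.Fubini'[symmetric]) (unfold F_def, measurable)
  also have "\<dots> \<le> (\<integral>\<^sup>+t. indicator {0..1::real} t *
      (ennreal (2 ^ DIM('a)) * emeasure lborel C * emeasure lborel S) \<partial>lborel)"
  proof (intro nn_integral_mono)
    fix t :: real
    have "(\<integral>\<^sup>+x. \<integral>\<^sup>+y. F x y t \<partial>lborel \<partial>lborel) = indicator {0..1} t *
        (\<integral>\<^sup>+x. \<integral>\<^sup>+y. indicator P x * indicator B y * indicator S (x + t *\<^sub>R (y - x)) \<partial>lborel \<partial>lborel)"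
      unfolding F_def by (subst nn_integral_cmult[symmetric], measurable, intro nn_integral_cong nn_integral_cmult, measurable)
    also have "\<dots> \<le> indicator {0..1} t * (ennreal (2 ^ DIM('a)) * emeasure lborel C * emeasure lborel S)"
      using nn_integral_indicator_segment_point_le[of P B S C t] \<open>P \<subseteq> C\<close>
      by (cases "t \<in> {0..1}") (auto simp: B_def intro: mult_left_mono)
    finally show "(\<integral>\<^sup>+x. \<integral>\<^sup>+y. F x y t \<partial>lborel \<partial>lborel)
        \<le> indicator {0..1} t * (ennreal (2 ^ DIM('a)) * emeasure lborel C * emeasure lborel S)" .
  qed
  also have "\<dots> = ennreal (2 ^ DIM('a)) * emeasure lborel C * emeasure lborel S"
    by (simp add: nn_integral_multc)
  finally show ?thesis
    unfolding S_def B_def .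
qed

lemma shell_isoperimetric:
  fixes C P :: "'a::euclidean_space set"
  assumes "convex C" and "bounded C" and "P \<subseteq> C" and [measurable]: "P \<in> sets borel" "C \<in> sets borel"
    and "0 < e" and "0 < D" and "\<And>x y. x \<in> C \<Longrightarrow> y \<in> C \<Longrightarrow> dist x y \<le> D"
  shows "e * measure lebesgue P * measure lebesgue {y\<in>C. e < infdist y P}
    \<le> D * 2 ^ DIM('a) * measure lebesgue C * measure lebesgue {z\<in>C. 0 < infdist z P \<and> infdist z P \<le> e}"
proof -
  define S where "S = {z\<in>C. 0 < infdist z P \<and> infdist z P \<le> e}"
  define B where "B = {y\<in>C. e < infdist y P}"
  have emeasure_eq: "emeasure lborel X = ennreal (measure lebesgue X)" if "X \<in> sets borel" "X \<subseteq> C" for X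
  proof -
    have "emeasure lborel X \<noteq> \<infinity>"
      using emeasure_bounded_finite[OF bounded_subset[OF \<open>bounded C\<close> \<open>X \<subseteq> C\<close>]] by simp
    then show ?thesis
      using \<open>X \<in> sets borel\<close> by (simp add: emeasure_eq_ennreal_measure measure_completion)
  qed
  have "ennreal (e/D) * ennreal (measure lebesgue P) * ennreal (measure lebesgue B)
      \<le> ennreal (2 ^ DIM('a)) * ennreal (measure lebesgue C) * ennreal (measure lebesgue S)"
    using shell_isoperimetric_emeasure[OF assms(1,3,4,5,6,7,8)] \<open>P \<subseteq> C\<close>
    by (simp add: S_def B_def emeasure_eq)
  then have "ennreal (e/D * measure lebesgue P * measure lebesgue B)
      \<le> ennreal (2 ^ DIM('a) * measure lebesgue C * measure lebesgue S)"
    using \<open>0 < e\<close> \<open>0 < D\<close> by (simp add: ennreal_mult[symmetric] del: times_divide_eq_left)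
  then have "e/D * measure lebesgue P * measure lebesgue B \<le> 2 ^ DIM('a) * measure lebesgue C * measure lebesgue S"
    by (rule ennreal_le_iff[THEN iffD1, rotated]) simp
  then show ?thesis
    using \<open>0 < D\<close> by (simp add: S_def B_def field_simps)
qed

lemma eps_nbhd_in_sets_lebesgue:
  assumes "K \<in> sets lebesgue"
  shows "eps_nbhd K A e \<in> sets lebesgue"
proof -
  have "{x. infdist x A \<le> e} \<in> sets borel"
    by measurable
  then show ?thesis
    using assms by (cases "A = {}") (auto simp: eps_nbhd_def Collect_conj_eq)
qed

lemma eps_nbhd_mono: "A \<subseteq> V \<Longrightarrow> eps_nbhd K A e \<subseteq> eps_nbhd K V e"
  unfolding eps_nbhd_def by (auto intro: order_trans[OF infdist_mono])

lemma measure_Diff_eps_nbhd_ge: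
  assumes "K \<in> lmeasurable" and "A \<subseteq> V"
  shows "measure lebesgue K - measure lebesgue (eps_nbhd K V e) \<le> measure lebesgue (K - eps_nbhd K A e)"
proof -
  have sets: "eps_nbhd K X e \<in> sets lebesgue" for X
    using fmeasurableD[OF assms(1)] by (rule eps_nbhd_in_sets_lebesgue)
  then have "eps_nbhd K V e \<in> lmeasurable"
    by (intro fmeasurableI2[OF assms(1)]) (auto simp: eps_nbhd_def)
  then have "measure lebesgue K - measure lebesgue (eps_nbhd K V e) \<le> measure lebesgue (K - eps_nbhd K V e)"
    using assms(1) by (rule measure_diff_le_measure_setdiff[rotated])
  also have "\<dots> \<le> measure lebesgue (K - eps_nbhd K A e)"
    using eps_nbhd_mono[OF assms(2)] assms(1) sets
    by (intro measure_mono_fmeasurable fmeasurable_Diff) auto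
  finally show ?thesis .
qed

lemma measure_shell_closure_le:
  fixes K A :: "'a::euclidean_space set"
  assumes "convex K" and "bounded K" and "A \<in> sets lebesgue" and "A \<noteq> {}"
  shows "measure lebesgue {z\<in>closure K. 0 < infdist z A \<and> infdist z A \<le> e}
    \<le> measure lebesgue (eps_nbhd K A e - A)"
proof -
  have "K \<in> sets lebesgue"
    using measurable_convex[OF assms(1,2)] by blast
  have "frontier K \<in> null_sets lebesgue"
    using negligible_convex_frontier[OF assms(1)] negligible_iff_null_sets by blast
  moreover have "closure K - K \<subseteq> frontier K"
    using interior_subset[of K] unfolding frontier_def by blast
  moreover have "closure K - K \<in> sets lebesgue"
    using \<open>K \<in> sets lebesgue\<close> by (intro sets.Diff) simp_all
  ultimately have null: "closure K - K \<in> null_sets lebesgue"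
    using null_sets_subset by blast
  have diff: "eps_nbhd K A e - A \<in> sets lebesgue"
    using eps_nbhd_in_sets_lebesgue[OF \<open>K \<in> sets lebesgue\<close>] assms(3) by blast
  have "{z\<in>closure K. 0 < infdist z A \<and> infdist z A \<le> e} \<subseteq> (eps_nbhd K A e - A) \<union> (closure K - K)"
    using assms(4) by (auto simp: eps_nbhd_def dest: infdist_zero)
  moreover have "{z\<in>closure K. 0 < infdist z A \<and> infdist z A \<le> e} \<in> sets lebesgue"
    by simp
  moreover have "(eps_nbhd K A e - A) \<union> (closure K - K) \<in> lmeasurable"
  proof (rule bounded_set_imp_lmeasurable)
    show "bounded ((eps_nbhd K A e - A) \<union> (closure K - K))"
      using closure_subset[of K]
      by (intro bounded_subset[OF bounded_closure[OF assms(2)]]) (auto simp: eps_nbhd_def)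
    show "(eps_nbhd K A e - A) \<union> (closure K - K) \<in> sets lebesgue"
      using diff null by blast
  qed
  ultimately have "measure lebesgue {z\<in>closure K. 0 < infdist z A \<and> infdist z A \<le> e}
      \<le> measure lebesgue ((eps_nbhd K A e - A) \<union> (closure K - K))"
    by (rule measure_mono_fmeasurable)
  also have "\<dots> = measure lebesgue (eps_nbhd K A e - A)"
    using diff null by (rule measure_Un_null_set)
  finally show ?thesis .
qed

text \<open>The isoperimetric inequality is applied to the closures of K and A, which are Borel, do
  not change distances to A, and change K only by its null frontier.\<close>

lemma eps_nbhd_isoperimetric:
  fixes K A :: "'a::euclidean_space set"
  assumes "convex K" and "bounded K" and "A \<subseteq> K" and "A \<in> sets lebesgue"
    and "0 < e" and "0 < D" and "diameter K \<le> D"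
  shows "e * measure lebesgue A * measure lebesgue (K - eps_nbhd K A e)
    \<le> D * 2 ^ DIM('a) * measure lebesgue K * measure lebesgue (eps_nbhd K A e - A)"
proof (cases "A = {}")
  case False
  define C where "C = closure K"
  define P where "P = closure A"
  have "convex C"
    using assms(1) by (simp add: C_def convex_closure)
  have [measurable]: "C \<in> sets borel" "P \<in> sets borel"
    by (simp_all add: C_def P_def)
  have "bounded C"
    using assms(2) by (simp add: C_def bounded_closure)
  then have lmeasurable_C: "X \<in> lmeasurable" if "X \<subseteq> C" "X \<in> sets lebesgue" for X
    using that bounded_set_imp_lmeasurable bounded_subset by blast
  have "K \<in> sets lebesgue" "K \<subseteq> C" "P \<subseteq> C"
    using assms(1-3) measurable_convex by (auto simp: C_def P_def closure_mono closure_subset)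
  have infdist_P: "infdist z P = infdist z A" for z
    by (simp add: P_def infdist_eq_setdist)
  have "eps_nbhd K A e \<in> sets lebesgue"
    using \<open>K \<in> sets lebesgue\<close> by (rule eps_nbhd_in_sets_lebesgue)
  have nbhd_eq: "eps_nbhd K A e = {x\<in>K. infdist x A \<le> e}"
    using False by (simp add: eps_nbhd_def)
  have diam: "dist x y \<le> D" if "x \<in> C" "y \<in> C" for x y
    using diameter_bounded_bound[OF \<open>bounded C\<close> that] assms(2,7) by (simp add: C_def diameter_closure)
  have iso: "e * measure lebesgue P * measure lebesgue {y\<in>C. e < infdist y A}
      \<le> D * 2 ^ DIM('a) * measure lebesgue C * measure lebesgue {z\<in>C. 0 < infdist z A \<and> infdist z A \<le> e}"
    using shell_isoperimetric[of C P e D] \<open>convex C\<close> \<open>bounded C\<close> \<open>P \<subseteq> C\<close> assms(5,6) diam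
    by (simp add: infdist_P)
  have A_le_P: "measure lebesgue A \<le> measure lebesgue P"
    using assms(4) \<open>P \<subseteq> C\<close> \<open>A \<subseteq> K\<close> \<open>K \<subseteq> C\<close>
    by (intro measure_mono_fmeasurable lmeasurable_C) (auto simp: P_def closure_subset)
  have "K - eps_nbhd K A e \<subseteq> {y\<in>C. e < infdist y A}"
    using \<open>K \<subseteq> C\<close> by (auto simp: nbhd_eq)
  moreover have "K - eps_nbhd K A e \<in> sets lebesgue"
    using \<open>K \<in> sets lebesgue\<close> \<open>eps_nbhd K A e \<in> sets lebesgue\<close> by blast
  moreover have "{y\<in>C. e < infdist y A} \<in> lmeasurable"
    by (intro lmeasurable_C) simp_all
  ultimately have outside_le: "measure lebesgue (K - eps_nbhd K A e) \<le> measure lebesgue {y\<in>C. e < infdist y A}"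
    by (rule measure_mono_fmeasurable)
  have C_eq_K: "measure lebesgue C = measure lebesgue K"
    using measure_closure[OF assms(2) negligible_convex_frontier[OF assms(1)]] by (simp add: C_def)
  have shell_le: "measure lebesgue {z\<in>C. 0 < infdist z A \<and> infdist z A \<le> e}
      \<le> measure lebesgue (eps_nbhd K A e - A)"
    unfolding C_def using assms(1,2,4) False by (rule measure_shell_closure_le)
  have "e * measure lebesgue A * measure lebesgue (K - eps_nbhd K A e)
      \<le> e * measure lebesgue P * measure lebesgue {y\<in>C. e < infdist y A}"
    using A_le_P outside_le assms(5) by (intro mult_mono mult_left_mono) auto
  also note iso
  also have "D * 2 ^ DIM('a) * measure lebesgue C * measure lebesgue {z\<in>C. 0 < infdist z A \<and> infdist z A \<le> e}
      \<le> D * 2 ^ DIM('a) * measure lebesgue K * measure lebesgue (eps_nbhd K A e - A)"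
    using shell_le assms(6) unfolding C_eq_K by (intro mult_left_mono) auto
  finally show ?thesis .
qed (simp add: eps_nbhd_def)

lemma eps_nbhd_isoperimetric_quotient:
  fixes K A :: "'a::euclidean_space set"
  assumes "convex K" and "bounded K" and "A \<subseteq> K" and "A \<in> sets lebesgue"
    and "0 < measure lebesgue A" and "0 < e" and "0 < D" and "diameter K \<le> D"
  shows "measure lebesgue (K - eps_nbhd K A e) / (D * 2 ^ DIM('a) * measure lebesgue K)
    \<le> measure lebesgue (eps_nbhd K A e - A) / (e * measure lebesgue A)"
proof (cases "measure lebesgue K = 0")
  case False
  then have "0 < measure lebesgue K"
    using measure_nonneg[of lebesgue K] by linarith
  then show ?thesis
    using eps_nbhd_isoperimetric[OF assms(1-4,6-8)] assms(5-7)
    by (simp add: pos_divide_le_eq pos_le_divide_eq mult_ac)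
qed (use assms(5,6) in simp)

lemma set_integral_exp_neg_bounds:
  fixes K T :: "'a::euclidean_space set"
  assumes f: "f \<in> borel_measurable (lebesgue_on K)" and "K \<in> sets lebesgue"
    and M: "\<forall>x\<in>K. \<bar>f x\<bar> \<le> M" and T: "T \<in> lmeasurable" "T \<subseteq> K"
  shows "set_integrable lebesgue T (\<lambda>x. exp (- f x))"
    and "exp (- M) * measure lebesgue T \<le> (\<integral>x\<in>T. exp (- f x) \<partial>lebesgue)"
    and "(\<integral>x\<in>T. exp (- f x) \<partial>lebesgue) \<le> exp M * measure lebesgue T"
proof -
  have T_sets: "T \<in> sets lebesgue" "emeasure lebesgue T \<noteq> \<infinity>"
    using fmeasurableD[OF T(1)] fmeasurableD2[OF T(1)] by simp_all
  have "(\<lambda>x. exp (- f x)) \<in> borel_measurable (lebesgue_on T)"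
    using measurable_restrict_mono[OF f T(2)] by measurable
  then have measurable: "set_borel_measurable lebesgue T (\<lambda>x. exp (- f x))"
    using T_sets by (simp add: set_borel_measurable_def borel_measurable_restrict_space_iff)
  have const: "set_integrable lebesgue T (\<lambda>_. c)" for c :: real
    using T_sets by (simp add: set_integrable_def integrable_indicator_iff less_top)
  have bound: "exp (- M) \<le> exp (- f x)" "exp (- f x) \<le> exp M" if "x \<in> T" for x
  proof -
    have "\<bar>f x\<bar> \<le> M"
      using M T(2) that by blast
    then show "exp (- M) \<le> exp (- f x)" "exp (- f x) \<le> exp M"
      by (simp_all add: abs_le_iff)
  qed
  show integrable: "set_integrable lebesgue T (\<lambda>x. exp (- f x))"
    using bound by (intro set_integrable_bound[OF const[of "exp M"] measurable] AE_I2) simp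
  have "exp (- M) * measure lebesgue T = (\<integral>x\<in>T. exp (- M) \<partial>lebesgue)"
    using T_sets by (simp add: set_integral_const)
  also have "\<dots> \<le> (\<integral>x\<in>T. exp (- f x) \<partial>lebesgue)"
    using bound by (intro set_integral_mono const integrable)
  finally show "exp (- M) * measure lebesgue T \<le> (\<integral>x\<in>T. exp (- f x) \<partial>lebesgue)" .
  have "(\<integral>x\<in>T. exp (- f x) \<partial>lebesgue) \<le> (\<integral>x\<in>T. exp M \<partial>lebesgue)"
    using bound by (intro set_integral_mono const integrable)
  also have "\<dots> = exp M * measure lebesgue T"
    using T_sets by (simp add: set_integral_const)
  finally show "(\<integral>x\<in>T. exp (- f x) \<partial>lebesgue) \<le> exp M * measure lebesgue T" .
qed

lemma cheeger_quotient_eq: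
  fixes K :: "'a::euclidean_space set"
  assumes f: "f \<in> borel_measurable (lebesgue_on K)" and "K \<in> sets lebesgue"
    and M: "\<forall>x\<in>K. \<bar>f x\<bar> \<le> M"
    and "T \<in> lmeasurable" and "U \<in> lmeasurable" and "T \<subseteq> U" and "U \<subseteq> K"
    and "mu_f K f T \<noteq> 0"
  shows "(mu_f K f U - mu_f K f T) / (e * mu_f K f T)
    = (\<integral>x\<in>U - T. exp (- f x) \<partial>lebesgue) / (e * (\<integral>x\<in>T. exp (- f x) \<partial>lebesgue))"
proof -
  note integrable = set_integral_exp_neg_bounds(1)[OF f \<open>K \<in> sets lebesgue\<close> M]
  have "U = T \<union> (U - T)"
    using \<open>T \<subseteq> U\<close> by blast
  then have "(\<integral>x\<in>U. exp (- f x) \<partial>lebesgue)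
      = (\<integral>x\<in>T \<union> (U - T). exp (- f x) \<partial>lebesgue)"
    by simp
  also have "\<dots> = (\<integral>x\<in>T. exp (- f x) \<partial>lebesgue) + (\<integral>x\<in>U - T. exp (- f x) \<partial>lebesgue)"
    using assms(4-7) by (intro set_integral_Un integrable) auto
  finally have split: "(\<integral>x\<in>U. exp (- f x) \<partial>lebesgue)
      = (\<integral>x\<in>T. exp (- f x) \<partial>lebesgue) + (\<integral>x\<in>U - T. exp (- f x) \<partial>lebesgue)" .
  have mu_f_eq: "mu_f K f X = (\<integral>x\<in>X. exp (- f x) \<partial>lebesgue) / (\<integral>x\<in>K. exp (- f x) \<partial>lebesgue)"
    if "X \<subseteq> K" for X
    using that by (simp add: mu_f_def Int_absorb2)
  have "(\<integral>x\<in>K. exp (- f x) \<partial>lebesgue) \<noteq> 0"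
    using assms(8) mu_f_eq[of T] assms(6,7) by auto
  then show ?thesis
    using assms(6,7) by (simp add: mu_f_eq split add_divide_distrib divide_divide_times_eq)
qed

lemma cheeger_quotient_lower_bound:
  fixes K A :: "'a::euclidean_space set"
  assumes "convex K" and "bounded K" and f: "f \<in> borel_measurable (lebesgue_on K)"
    and M: "\<forall>x\<in>K. \<bar>f x\<bar> \<le> M" and "A \<subseteq> K" and "A \<in> sets lebesgue"
    and "0 < mu_f K f A" and "0 < e" and "0 < D" and "diameter K \<le> D"
  shows "exp (- 2 * M) * measure lebesgue (K - eps_nbhd K A e) / (D * 2 ^ DIM('a) * measure lebesgue K)
    \<le> (mu_f K f (eps_nbhd K A e) - mu_f K f A) / (e * mu_f K f A)"
proof -
  define Ae where "Ae = eps_nbhd K A e"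
  define IA where "IA = (\<integral>x\<in>A. exp (- f x) \<partial>lebesgue)"
  define ID where "ID = (\<integral>x\<in>Ae - A. exp (- f x) \<partial>lebesgue)"
  have "K \<in> lmeasurable"
    using assms(1,2) by (rule measurable_convex)
  then have "K \<in> sets lebesgue"
    by blast
  have lmeasurable_K: "X \<in> lmeasurable" if "X \<subseteq> K" "X \<in> sets lebesgue" for X
    using that bounded_set_imp_lmeasurable bounded_subset[OF assms(2)] by blast
  note bounds = set_integral_exp_neg_bounds[OF f \<open>K \<in> sets lebesgue\<close> M]
  have "IA \<noteq> 0"
    using assms(5,7) by (auto simp: mu_f_def IA_def Int_absorb2)
  then have "A \<noteq> {}"
    by (auto simp: IA_def set_lebesgue_integral_def)
  then have "A \<subseteq> Ae" "Ae \<subseteq> K"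
    using assms(5,8) by (auto simp: Ae_def eps_nbhd_def infdist_zero)
  moreover have "Ae \<in> sets lebesgue"
    unfolding Ae_def using \<open>K \<in> sets lebesgue\<close> by (rule eps_nbhd_in_sets_lebesgue)
  ultimately have A: "A \<in> lmeasurable" and "Ae \<in> lmeasurable"
    and Ae_diff: "Ae - A \<in> lmeasurable" "Ae - A \<subseteq> K"
    using assms(5,6) by (blast intro: lmeasurable_K)+
  have "0 \<le> exp (- M) * measure lebesgue A"
    by simp
  also have "\<dots> \<le> IA"
    using bounds(2)[OF A assms(5)] by (simp add: IA_def)
  finally have "0 < IA"
    using \<open>IA \<noteq> 0\<close> by simp
  also have "IA \<le> exp M * measure lebesgue A"
    using bounds(3)[OF A assms(5)] by (simp add: IA_def)
  finally have "0 < measure lebesgue A"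
    by (simp add: zero_less_mult_iff)
  have "measure lebesgue (K - Ae) / (D * 2 ^ DIM('a) * measure lebesgue K)
      \<le> measure lebesgue (Ae - A) / (e * measure lebesgue A)"
    unfolding Ae_def using \<open>0 < measure lebesgue A\<close>
    by (rule eps_nbhd_isoperimetric_quotient[OF assms(1,2,5,6) _ assms(8,9,10)])
  then have "exp (- 2 * M) * (measure lebesgue (K - Ae) / (D * 2 ^ DIM('a) * measure lebesgue K))
      \<le> exp (- 2 * M) * (measure lebesgue (Ae - A) / (e * measure lebesgue A))"
    by (rule mult_left_mono) simp
  also have "\<dots> = exp (- M) * measure lebesgue (Ae - A) / (e * (exp M * measure lebesgue A))"
  proof -
    have "exp (- 2 * M) = exp (- M) / exp M"
      unfolding exp_diff[symmetric] by (rule arg_cong[where f = exp]) simp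
    then show ?thesis
      by simp
  qed
  also have "\<dots> \<le> ID / (e * IA)"
  proof (rule frac_le)
    show "exp (- M) * measure lebesgue (Ae - A) \<le> ID"
      using bounds(2)[OF Ae_diff] by (simp add: ID_def)
    then show "0 \<le> ID"
      by (rule order_trans[rotated]) simp
    show "0 < e * IA" "e * IA \<le> e * (exp M * measure lebesgue A)"
      using \<open>0 < IA\<close> \<open>IA \<le> exp M * measure lebesgue A\<close> assms(8) by simp_all
  qed
  also have "\<dots> = (mu_f K f Ae - mu_f K f A) / (e * mu_f K f A)"
    using cheeger_quotient_eq[OF f \<open>K \<in> sets lebesgue\<close> M A \<open>Ae \<in> lmeasurable\<close> \<open>A \<subseteq> Ae\<close> \<open>Ae \<subseteq> K\<close>]
      assms(7) by (simp add: ID_def IA_def)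
  finally show ?thesis
    by (simp add: Ae_def)
qed

lemma cheeger_quotient_ge_nbhd_defect:
  fixes K V A :: "'a::euclidean_space set"
  assumes "convex K" and "bounded K" and "f \<in> borel_measurable (lebesgue_on K)"
    and "\<forall>x\<in>K. \<bar>f x\<bar> \<le> M" and "V \<subseteq> K" and "A \<subseteq> V" and "A \<in> sets lebesgue"
    and "0 < mu_f K f A" and "0 < e" and "0 < D" and "diameter K \<le> D"
    and "\<delta> \<le> measure lebesgue K - measure lebesgue (eps_nbhd K V e)"
  shows "exp (- 2 * M) * \<delta> / (D * 2 ^ DIM('a) * measure lebesgue K)
    \<le> (mu_f K f (eps_nbhd K A e) - mu_f K f A) / (e * mu_f K f A)"
proof -
  have "\<delta> \<le> measure lebesgue (K - eps_nbhd K A e)"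
    using measure_Diff_eps_nbhd_ge[OF measurable_convex[OF assms(1,2)] assms(6)] assms(12)
    by (rule order_trans[rotated])
  then have "exp (- 2 * M) * \<delta> / (D * 2 ^ DIM('a) * measure lebesgue K)
      \<le> exp (- 2 * M) * measure lebesgue (K - eps_nbhd K A e) / (D * 2 ^ DIM('a) * measure lebesgue K)"
    using assms(10) by (intro divide_right_mono mult_left_mono) auto
  also have "\<dots> \<le> (mu_f K f (eps_nbhd K A e) - mu_f K f A) / (e * mu_f K f A)"
    using assms(5,6) by (intro cheeger_quotient_lower_bound[OF assms(1-4) _ assms(7-11)]) auto
  finally show ?thesis .
qed

theorem proposition4:
  fixes K V :: "'a::euclidean_space set" and f :: "'a \<Rightarrow> real"
  assumes "convex K" and "bounded K"
    and "V \<subseteq> K" and "V \<in> sets lebesgue"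
    and "\<exists>L. ((\<lambda>e. measure lebesgue (eps_nbhd K V e)) \<longlongrightarrow> L) (at_right 0)
              \<and> L < measure lebesgue K"
    and "f \<in> borel_measurable (lebesgue_on K)"
    and "bounded (f ` K)"
  shows "cheeger K f V > 0"
proof -
  obtain L where L: "((\<lambda>e. measure lebesgue (eps_nbhd K V e)) \<longlongrightarrow> L) (at_right 0)"
    and "L < measure lebesgue K"
    using assms(5) by blast
  obtain M where M: "\<forall>x\<in>K. \<bar>f x\<bar> \<le> M"
    using assms(7) by (auto simp: bounded_iff)
  have "0 \<le> L"
    by (rule tendsto_lowerbound[OF L]) (auto simp: trivial_limit_at_right_real)
  define \<delta> where "\<delta> = (measure lebesgue K - L) / 2"
  define D where "D = diameter K + 1"
  define c where "c = exp (- 2 * M) * \<delta> / (D * 2 ^ DIM('a) * measure lebesgue K)"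
  have "0 < \<delta>" "0 < D" "0 < c"
    using \<open>0 \<le> L\<close> \<open>L < measure lebesgue K\<close> diameter_ge_0[OF assms(2)] by (auto simp: \<delta>_def D_def c_def)
  have "\<forall>\<^sub>F e in at_right 0. 0 < e \<and> measure lebesgue (eps_nbhd K V e) < L + \<delta>"
    using eventually_conj[OF eventually_at_right_less order_tendstoD(2)[OF L, of "L + \<delta>"]] \<open>0 < \<delta>\<close>
    by simp
  moreover have "c \<le> (mu_f K f (eps_nbhd K A e) - mu_f K f A) / (e * mu_f K f A)"
    if "0 < e" "measure lebesgue (eps_nbhd K V e) < L + \<delta>"
      and "A \<subseteq> V" "A \<in> sets lebesgue" "0 < mu_f K f A" for e A
    unfolding c_def using that assms(3) \<open>0 < D\<close>
    by (intro cheeger_quotient_ge_nbhd_defect[OF assms(1,2,6) M]) (auto simp: D_def \<delta>_def field_simps)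
  ultimately have "ereal c \<le> cheeger K f V"
    unfolding cheeger_def by (intro Liminf_bounded) (auto elim!: eventually_mono intro!: INF_greatest)
  then show ?thesis
    using \<open>0 < c\<close> by (metis ereal_less(2) less_le_trans)
qed

end
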